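(* Let $F,G\in\mathcal{S}^*(\mathbb{Z})$. Then, as $N\to\infty$ (with $N\in\mathbb{N}$), uniformly in $z\in\mathbb{T}$, $$\mathfrak{a}^{( * )}(z,F^{\langle N\rangle}+(G^{\langle N\rangle})_{\to3N})=\mathfrak{a}^{( * )}(z,F)\mathfrak{a}^{( * )}(z,G)+z^{3N}\mathfrak{b}^{( * )}(z,F)\mathfrak{b}(z,G)+o(1),$$ $$\mathfrak{b}(z,F^{\langle N\rangle}+(G^{\langle N\rangle})_{\to3N})=z^{3N}\mathfrak{b}(z,G)\mathfrak{a}(z,F)+\mathfrak{b}(z,F)\mathfrak{a}^{( * )}(z,G)+o(1),$$ $$\limsup_{N\to\infty}|\mathfrak{r}(z,F^{\langle N\rangle}+(G^{\langle N\rangle})_{\to3N})-\mathfrak{r}(z,F^{\langle N\rangle})|\leqslant\frac{|\mathfrak{r}(z,G)|}{1-|\mathfrak{r}(z,G)|}.$$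
   Context: $\mathbb{T}$, $\mathbb{D}$ denote the unit circle and open unit disc. $\mathcal{S}^*(\mathbb{Z})$ is the set of sequences $F$ on $\mathbb{Z}$ with $\sup_n|F_n|<1$ and $|F_n|\leqslant C_\ell(1+|n|)^{-\ell}$ for all $n$ and every $\ell\geqslant0$. $F^{\langle N\rangle}_n=F_n\chi_{|n|\leqslant N}$, $(H_{\to M})_n=H_{n-M}$. For a finitely supported $G$ with values in $\mathbb{D}$: $\widetilde X_n(z)=I$ below the support, $\widetilde X_n=(1-|G_n|^2)^{-1/2}\begin{pmatrix}1&\overline{G_n}z^{-n}\\ G_nz^n&1\end{pmatrix}\widetilde X_{n-1}$, and above the support $\widetilde X_n=\begin{pmatrix}\mathfrak{a}(z,G)&\mathfrak{b}^{( * )}(z,G)\\ \mathfrak{b}(z,G)&\mathfrak{a}^{( * )}(z,G)\end{pmatrix}$ with $f^{( * )}(z)=\overline{f(\bar z^{-1})}$. For $F\in\mathcal{S}^*(\mathbb{Z})$, $\mathfrak{a}(z,F)$ and $\mathfrak{b}(z,F)$ are the limits (uniform on $\mathbb{T}$) of $\mathfrak{a}(z,F^{\langle N\rangle})$, $\mathfrak{b}(z,F^{\langle N\rangle})$ as $N\to\infty$. Also $\mathfrak{r}=\mathfrak{b}/\mathfrak{a}^{( * )}$. *)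

theory Defs
  imports "HOL-Analysis.Analysis"
begin

definition Sstar :: "(int \<Rightarrow> complex) set" where
  "Sstar = {F. (\<exists>\<rho><1. \<forall>n. cmod (F n) \<le> \<rho>) \<and>
              (\<forall>l::real\<ge>0. \<exists>C. \<forall>n. cmod (F n) \<le> C * (1 + real_of_int \<bar>n\<bar>) powr (-l))}"

definition trunc :: "int \<Rightarrow> (int \<Rightarrow> complex) \<Rightarrow> int \<Rightarrow> complex" where
  "trunc N F n = (if \<bar>n\<bar> \<le> N then F n else 0)"

definition shift :: "int \<Rightarrow> (int \<Rightarrow> complex) \<Rightarrow> int \<Rightarrow> complex" where
  "shift M H n = H (n - M)"

definition step_mat :: "(int \<Rightarrow> complex) \<Rightarrow> complex \<Rightarrow> int \<Rightarrow> complex^2^2" where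
  "step_mat G z n =
     (\<chi> i j. complex_of_real (1 / sqrt (1 - (cmod (G n))\<^sup>2)) *
        (if i = 1 \<and> j = 1 then 1
         else if i = 1 \<and> j = 2 then cnj (G n) * z powi (-n)
         else if i = 2 \<and> j = 1 then G n * z powi n
         else 1))"

fun transfer :: "(int \<Rightarrow> complex) \<Rightarrow> complex \<Rightarrow> int \<Rightarrow> nat \<Rightarrow> complex^2^2" where
  "transfer G z lo 0 = mat 1"
| "transfer G z lo (Suc k) = step_mat G z (lo + int k) ** transfer G z lo k"

text \<open>Product over [-K..K]; for finitely supported G this is eventually constant
  (the matrix X above the support), and for G in S*(Z) it is the matrix for G^<K>,
  so the limit below is the paper's a(z,G), b(z,G) in both cases.\<close>
definition frak_a :: "(int \<Rightarrow> complex) \<Rightarrow> complex \<Rightarrow> complex" where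
  "frak_a G z = lim (\<lambda>K. transfer G z (- int K) (2 * K + 1) $ 1 $ 1)"

definition frak_b :: "(int \<Rightarrow> complex) \<Rightarrow> complex \<Rightarrow> complex" where
  "frak_b G z = lim (\<lambda>K. transfer G z (- int K) (2 * K + 1) $ 2 $ 1)"

definition pstar :: "(complex \<Rightarrow> complex) \<Rightarrow> complex \<Rightarrow> complex" where
  "pstar f z = cnj (f (inverse (cnj z)))"

definition frak_r :: "(int \<Rightarrow> complex) \<Rightarrow> complex \<Rightarrow> complex" where
  "frak_r G z = frak_b G z / pstar (frak_a G) z"

end

theory Submission
  imports Defs
begin

(* On the unit circle the step matrix of G at n has the form [[a, cnj b], [b, cnj a]] with
   |a|^2 - |b|^2 = 1, so transfer matrices are encoded by pairs (a, b); |a| + |b| is a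
   submultiplicative norm in which the step at n is within O(|G n|) of the identity. Since
   sum |G n| is finite, the products over [-K, K] therefore converge uniformly on the circle.
   If 2N < M, the supports of F^<N> and of G^<N> shifted by M are disjoint, so the transfer
   matrix of their sum is the product of the one of G^<N>, with b multiplied by z^M, and the
   one of F^<N>; letting N tend to infinity gives the first two claims. For the third: if p
   and q have determinant 1, the reflection coefficients b / cnj a of q p and of p differ by
   at most |r| / (1 - |r|), where r is the reflection coefficient of q. *)

lemma uniform_limit_of_summable_increments:
  fixes f :: "nat \<Rightarrow> 'a \<Rightarrow> 'b::banach"
  assumes "\<And>k z. z \<in> S \<Longrightarrow> norm (f (Suc k) z - f k z) \<le> M k" and "summable M"
  shows "uniform_limit S f (\<lambda>z. lim (\<lambda>k. f k z)) sequentially"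
proof -
  obtain L where "uniform_limit S (\<lambda>n z. \<Sum>i<n. f (Suc i) z - f i z) L sequentially"
    using Weierstrass_m_test'[where f="\<lambda>i z. f (Suc i) z - f i z", OF assms]
    unfolding uniformly_convergent_on_def by blast
  then have "uniform_limit S (\<lambda>n z. (\<Sum>i<n. f (Suc i) z - f i z) + f 0 z) (\<lambda>z. L z + f 0 z) sequentially"
    by (intro uniform_limit_add uniform_limit_const)
  moreover have "(\<Sum>i<n. f (Suc i) z - f i z) + f 0 z = f n z" for n z
    using sum_lessThan_telescope[where f="\<lambda>i. f i z"] by simp
  ultimately have "uniformly_convergent_on S f"
    unfolding uniformly_convergent_on_def by auto
  then show ?thesis
    by (simp add: uniformly_convergent_uniform_limit_iff)
qed

lemma uniform_limit_null_if_dominated: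
  fixes E x y :: "'i \<Rightarrow> 'a \<Rightarrow> 'b::real_normed_vector"
  assumes "uniform_limit S x X F" and "uniform_limit S y Y F"
    and "eventually (\<lambda>N. \<forall>z\<in>S. norm (E N z) \<le> norm (x N z - X z) + norm (y N z - Y z)) F"
  shows "uniform_limit S E (\<lambda>z. 0) F"
proof (rule uniform_limitI)
  fix \<epsilon> :: real
  assume "0 < \<epsilon>"
  then have half: "0 < \<epsilon> / 2"
    by simp
  from uniform_limitD[OF assms(1) half] uniform_limitD[OF assms(2) half] assms(3)
  show "\<forall>\<^sub>F N in F. \<forall>z\<in>S. dist (E N z) 0 < \<epsilon>"
  proof eventually_elim
    case (elim N)
    show ?case
    proof
      fix z
      assume "z \<in> S"
      then have "norm (x N z - X z) < \<epsilon> / 2" and "norm (y N z - Y z) < \<epsilon> / 2"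
        and "norm (E N z) \<le> norm (x N z - X z) + norm (y N z - Y z)"
        using elim by (auto simp: dist_norm)
      then show "dist (E N z) 0 < \<epsilon>"
        by simp
    qed
  qed
qed

lemma bounded_image_cnj: "bounded (f ` S) \<Longrightarrow> bounded ((\<lambda>z. cnj (f z)) ` S)"
  by (simp add: bounded_iff)

section \<open>Pairs encoding the matrices [[a, cnj b], [b, cnj a]]\<close>

definition su11_mult :: "complex \<times> complex \<Rightarrow> complex \<times> complex \<Rightarrow> complex \<times> complex" where
  "su11_mult p q = (fst p * fst q + cnj (snd p) * snd q, snd p * fst q + cnj (fst p) * snd q)"

definition su11_mat :: "complex \<times> complex \<Rightarrow> complex^2^2" where
  "su11_mat p = (\<chi> i j. if i = 1 \<and> j = 1 then fst p else if i = 1 \<and> j = 2 then cnj (snd p)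
      else if i = 2 \<and> j = 1 then snd p else cnj (fst p))"

definition su11_det :: "complex \<times> complex \<Rightarrow> real" where
  "su11_det p = (cmod (fst p))\<^sup>2 - (cmod (snd p))\<^sup>2"

definition su11_norm :: "complex \<times> complex \<Rightarrow> real" where
  "su11_norm p = cmod (fst p) + cmod (snd p)"

definition su11_refl :: "complex \<times> complex \<Rightarrow> complex" where
  "su11_refl p = snd p / cnj (fst p)"

definition su11_rotate :: "complex \<Rightarrow> complex \<times> complex \<Rightarrow> complex \<times> complex" where
  "su11_rotate w p = (fst p, w * snd p)"

lemma su11_mat_mult: "su11_mat p ** su11_mat q = su11_mat (su11_mult p q)"
  unfolding su11_mat_def su11_mult_def matrix_matrix_mult_def
  by (simp add: vec_eq_iff sum_2 algebra_simps) (metis exhaust_2)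

lemma mat_1_eq_su11_mat: "mat 1 = su11_mat (1, 0)"
  unfolding su11_mat_def mat_def by (simp add: vec_eq_iff forall_2)

lemma su11_mult_assoc: "su11_mult (su11_mult p q) r = su11_mult p (su11_mult q r)"
  by (simp add: su11_mult_def algebra_simps)

lemma su11_mult_one_left [simp]: "su11_mult (1, 0) p = p"
  and su11_mult_one_right [simp]: "su11_mult p (1, 0) = p"
  by (simp_all add: su11_mult_def)

lemma su11_mult_diff_left: "su11_mult (p - q) r = su11_mult p r - su11_mult q r"
  and su11_mult_diff_right: "su11_mult r (p - q) = su11_mult r p - su11_mult r q"
  by (simp_all add: su11_mult_def algebra_simps)

lemma su11_mult_rotate:
  assumes "cmod w = 1"
  shows "su11_mult (su11_rotate w p) (su11_rotate w q) = su11_rotate w (su11_mult p q)"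
proof -
  have "cnj w * w = 1"
    using assms by (metis complex_norm_square mult.commute of_real_1 one_power2)
  moreover have "cnj (w * b) * (w * c) = (cnj w * w) * (cnj b * c)" for b c
    by (simp add: ac_simps)
  ultimately have "cnj (w * b) * (w * c) = cnj b * c" for b c
    by simp
  then show ?thesis
    by (simp add: su11_mult_def su11_rotate_def distrib_left mult.left_commute)
qed

lemma su11_det_rotate: "cmod w = 1 \<Longrightarrow> su11_det (su11_rotate w p) = su11_det p"
  by (simp add: su11_det_def su11_rotate_def norm_mult)

lemma norm_su11_refl_rotate: "cmod w = 1 \<Longrightarrow> cmod (su11_refl (su11_rotate w p)) = cmod (su11_refl p)"
  by (simp add: su11_refl_def su11_rotate_def norm_mult norm_divide)

lemma su11_det_mult: "su11_det (su11_mult p q) = su11_det p * su11_det q"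
proof -
  obtain a1 b1 a2 b2 where p: "p = (a1, b1)" and q: "q = (a2, b2)" by fastforce
  have "complex_of_real (su11_det (su11_mult p q)) =
    (a1 * a2 + cnj b1 * b2) * (cnj a1 * cnj a2 + b1 * cnj b2)
    - (b1 * a2 + cnj a1 * b2) * (cnj b1 * cnj a2 + a1 * cnj b2)"
    unfolding su11_det_def su11_mult_def p q of_real_diff complex_norm_square by simp
  also have "\<dots> = (a1 * cnj a1 - b1 * cnj b1) * (a2 * cnj a2 - b2 * cnj b2)"
    by algebra
  also have "\<dots> = complex_of_real (su11_det p * su11_det q)"
    unfolding su11_det_def p q of_real_diff of_real_mult complex_norm_square by simp
  finally show ?thesis by (simp only: of_real_eq_iff)
qed

lemma su11_det_eq_1_imp:
  assumes "su11_det p = 1"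
  shows "fst p \<noteq> 0" "cmod (su11_refl p) < 1"
proof -
  have "(cmod (snd p))\<^sup>2 < (cmod (fst p))\<^sup>2"
    using assms by (simp add: su11_det_def)
  then have lt: "cmod (snd p) < cmod (fst p)"
    by (rule power2_less_imp_less) simp
  then have pos: "0 < cmod (fst p)"
    using norm_ge_zero[of "snd p"] by linarith
  then show "fst p \<noteq> 0" by auto
  have "cmod (snd p) / cmod (fst p) < 1"
    using lt pos by (simp only: divide_less_eq_1_pos)
  then show "cmod (su11_refl p) < 1"
    by (simp only: su11_refl_def norm_divide complex_mod_cnj)
qed

lemma su11_norm_nonneg: "0 \<le> su11_norm p"
  by (simp add: su11_norm_def)

lemma norm_fst_le_su11_norm: "cmod (fst p) \<le> su11_norm p"
  and norm_snd_le_su11_norm: "cmod (snd p) \<le> su11_norm p"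
  by (simp_all add: su11_norm_def)

lemma su11_norm_mult: "su11_norm (su11_mult p q) \<le> su11_norm p * su11_norm q"
proof -
  have "su11_norm (su11_mult p q) \<le> (cmod (fst p) * cmod (fst q) + cmod (snd p) * cmod (snd q)) +
      (cmod (snd p) * cmod (fst q) + cmod (fst p) * cmod (snd q))"
    unfolding su11_norm_def su11_mult_def
    by (intro add_mono) (auto intro!: order.trans[OF norm_triangle_ineq] simp: norm_mult)
  also have "\<dots> = su11_norm p * su11_norm q" by (simp add: su11_norm_def algebra_simps)
  finally show ?thesis .
qed

lemma su11_norm_triangle: "su11_norm (p + q) \<le> su11_norm p + su11_norm q"
  using norm_triangle_ineq[of "fst p" "fst q"] norm_triangle_ineq[of "snd p" "snd q"]
  by (simp add: su11_norm_def)

lemma su11_norm_le_1_plus: "su11_norm p \<le> 1 + su11_norm (p - (1, 0))"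
  using su11_norm_triangle[of "(1, 0)" "p - (1, 0)"] by (simp add: su11_norm_def)

fun su11_prod :: "(int \<Rightarrow> complex \<times> complex) \<Rightarrow> int \<Rightarrow> nat \<Rightarrow> complex \<times> complex" where
  "su11_prod s lo 0 = (1, 0)"
| "su11_prod s lo (Suc k) = su11_mult (s (lo + int k)) (su11_prod s lo k)"

definition su11_sym_prod :: "(int \<Rightarrow> complex \<times> complex) \<Rightarrow> nat \<Rightarrow> complex \<times> complex" where
  "su11_sym_prod s K = su11_prod s (- int K) (2 * K + 1)"

lemma su11_prod_add:
  "su11_prod s lo (k + m) = su11_mult (su11_prod s (lo + int k) m) (su11_prod s lo k)"
  by (induction m) (simp_all add: su11_mult_assoc algebra_simps)

lemma su11_prod_trivial:
  "(\<And>j. j < m \<Longrightarrow> s (lo + int j) = (1, 0)) \<Longrightarrow> su11_prod s lo m = (1, 0)"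
  by (induction m) simp_all

lemma su11_prod_cong:
  "(\<And>j. j < m \<Longrightarrow> s (lo + int j) = t (lo + int j)) \<Longrightarrow> su11_prod s lo m = su11_prod t lo m"
  by (induction m) simp_all

lemma su11_prod_reindex: "su11_prod s (lo + d) m = su11_prod (\<lambda>n. s (n + d)) lo m"
  by (induction m) (simp_all add: ac_simps)

lemma su11_prod_rotate:
  "cmod w = 1 \<Longrightarrow> su11_prod (\<lambda>n. su11_rotate w (s n)) lo m = su11_rotate w (su11_prod s lo m)"
  by (induction m) (simp_all add: su11_mult_rotate, simp add: su11_rotate_def)

lemma su11_det_prod: "(\<And>n. su11_det (s n) = 1) \<Longrightarrow> su11_det (su11_prod s lo k) = 1"
  by (induction k) (simp_all add: su11_det_mult su11_det_def[of "(1, 0)"])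

lemma su11_sym_prod_Suc:
  "su11_sym_prod s (Suc K) =
     su11_mult (s (int (Suc K))) (su11_mult (su11_sym_prod s K) (s (- int (Suc K))))"
proof -
  have "su11_sym_prod s (Suc K) = su11_prod s (- int (Suc K)) (Suc (1 + (2 * K + 1)))"
    by (simp add: su11_sym_prod_def)
  also have "\<dots> = su11_mult (s (int (Suc K))) (su11_prod s (- int (Suc K)) (1 + (2 * K + 1)))"
    by simp
  also have "su11_prod s (- int (Suc K)) (1 + (2 * K + 1)) =
      su11_mult (su11_sym_prod s K) (s (- int (Suc K)))"
    by (simp only: su11_prod_add) (simp add: su11_sym_prod_def)
  finally show ?thesis .
qed

lemma su11_sym_prod_eq_prod:
  assumes "\<And>n. n < lo \<or> lo + int m \<le> n \<Longrightarrow> s n = (1, 0)"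
    and "- int K \<le> lo" and "lo + int m \<le> int K + 1"
  shows "su11_sym_prod s K = su11_prod s lo m"
proof -
  define p where "p = nat (lo + int K)"
  define r where "r = nat (int K + 1 - lo - int m)"
  have len: "2 * K + 1 = p + m + r" and lo: "- int K + int p = lo"
    using assms(2,3) unfolding p_def r_def by linarith+
  have "su11_sym_prod s K = su11_mult (su11_prod s (- int K + int (p + m)) r)
      (su11_mult (su11_prod s (- int K + int p) m) (su11_prod s (- int K) p))"
    unfolding su11_sym_prod_def len su11_prod_add by simp
  also have "su11_prod s (- int K + int (p + m)) r = (1, 0)"
    by (rule su11_prod_trivial, rule assms(1)) (use lo in auto)
  also have "su11_prod s (- int K) p = (1, 0)"
    by (rule su11_prod_trivial, rule assms(1)) (use lo in auto)
  finally show ?thesis using lo by simp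
qed

lemma su11_sym_prod_norm_le:
  assumes dev: "\<And>n. su11_norm (s n - (1, 0)) \<le> e n"
    and e_nonneg: "\<And>n. 0 \<le> e n" and e_summable: "summable (\<lambda>k. e (int k) + e (- int k))"
  shows "su11_norm (su11_sym_prod s K) \<le> exp (\<Sum>k. e (int k) + e (- int k))"
proof -
  define u where "u k = e (int k) + e (- int k)" for k
  have step: "su11_norm (s n) \<le> exp (e n)" for n
    using su11_norm_le_1_plus[of "s n"] dev[of n] exp_ge_add_one_self[of "e n"] by linarith
  have "su11_norm (su11_sym_prod s K) \<le> exp (\<Sum>k\<le>K. u k)"
  proof (induction K)
    case 0
    have "su11_norm (su11_sym_prod s 0) \<le> exp (e 0)"
      using step by (simp add: su11_sym_prod_def)
    also have "\<dots> \<le> exp (\<Sum>k\<le>0. u k)"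
      using e_nonneg[of 0] by (simp add: u_def)
    finally show ?case .
  next
    case (Suc K)
    have "su11_norm (su11_sym_prod s (Suc K)) \<le> su11_norm (s (int (Suc K))) *
        (su11_norm (su11_sym_prod s K) * su11_norm (s (- int (Suc K))))"
      unfolding su11_sym_prod_Suc
      by (rule order.trans[OF su11_norm_mult]) (intro mult_left_mono su11_norm_mult su11_norm_nonneg)
    also have "\<dots> \<le> exp (e (int (Suc K))) * (exp (\<Sum>k\<le>K. u k) * exp (e (- int (Suc K))))"
      using Suc step by (intro mult_mono su11_norm_nonneg mult_nonneg_nonneg) auto
    also have "\<dots> = exp (\<Sum>k\<le>Suc K. u k)"
      by (simp only: u_def sum.atMost_Suc exp_add) (simp add: ac_simps)
    finally show ?case .
  qed
  also have "(\<Sum>k\<le>K. u k) \<le> (\<Sum>k. u k)"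
    using e_summable e_nonneg by (intro sum_le_suminf) (auto simp: u_def)
  finally show ?thesis
    by (simp add: u_def)
qed

lemma su11_sym_prod_increment_le:
  assumes dev: "\<And>n. su11_norm (s n - (1, 0)) \<le> e n"
    and e_nonneg: "\<And>n. 0 \<le> e n" and e_le: "\<And>n. e n \<le> E"
    and bound: "\<And>K. su11_norm (su11_sym_prod s K) \<le> B"
  shows "su11_norm (su11_sym_prod s (Suc K) - su11_sym_prod s K)
    \<le> B * (1 + E) * (e (int (Suc K)) + e (- int (Suc K)))"
proof -
  define Q where "Q = su11_sym_prod s K"
  define p where "p = s (int (Suc K))"
  define q where "q = s (- int (Suc K))"
  have B_nonneg: "0 \<le> B" and E_nonneg: "0 \<le> E"
    using bound[of 0] su11_norm_nonneg e_nonneg[of 0] e_le[of 0] by (blast intro: order.trans)+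
  have "su11_sym_prod s (Suc K) - Q = su11_mult (p - (1, 0)) (su11_mult Q q) + su11_mult Q (q - (1, 0))"
    unfolding su11_sym_prod_Suc su11_mult_diff_left su11_mult_diff_right Q_def p_def q_def
    by simp
  then have "su11_norm (su11_sym_prod s (Suc K) - Q)
      \<le> su11_norm (su11_mult (p - (1, 0)) (su11_mult Q q)) + su11_norm (su11_mult Q (q - (1, 0)))"
    by (simp only: su11_norm_triangle)
  also have "\<dots> \<le> su11_norm (p - (1, 0)) * (su11_norm Q * su11_norm q) + su11_norm Q * su11_norm (q - (1, 0))"
    by (intro add_mono order.trans[OF su11_norm_mult] mult_left_mono su11_norm_mult
        su11_norm_nonneg order.refl)
  also have "\<dots> \<le> e (int (Suc K)) * (B * (1 + E)) + B * e (- int (Suc K))"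
  proof -
    have "su11_norm q \<le> 1 + E"
      using su11_norm_le_1_plus[of q] dev[of "- int (Suc K)"] e_le[of "- int (Suc K)"]
      unfolding q_def by linarith
    then show ?thesis
      using dev bound B_nonneg E_nonneg e_nonneg unfolding Q_def p_def q_def
      by (intro add_mono mult_mono su11_norm_nonneg mult_nonneg_nonneg) auto
  qed
  also have "\<dots> \<le> B * (1 + E) * (e (int (Suc K)) + e (- int (Suc K)))"
    using mult_nonneg_nonneg[OF mult_nonneg_nonneg[OF B_nonneg E_nonneg] e_nonneg[of "- int (Suc K)"]]
    by (simp add: algebra_simps)
  finally show ?thesis
    unfolding Q_def .
qed

lemma su11_sym_prod_uniform_limit:
  fixes s :: "'a \<Rightarrow> int \<Rightarrow> complex \<times> complex"
  assumes dev: "\<And>z n. z \<in> S \<Longrightarrow> su11_norm (s z n - (1, 0)) \<le> e n"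
    and e_nonneg: "\<And>n. 0 \<le> e n" and e_summable: "summable (\<lambda>k. e (int k) + e (- int k))"
  shows "uniform_limit S (\<lambda>K z. fst (su11_sym_prod (s z) K))
           (\<lambda>z. lim (\<lambda>K. fst (su11_sym_prod (s z) K))) sequentially"
    and "uniform_limit S (\<lambda>K z. snd (su11_sym_prod (s z) K))
           (\<lambda>z. lim (\<lambda>K. snd (su11_sym_prod (s z) K))) sequentially"
proof -
  define E where "E = (\<Sum>k. e (int k) + e (- int k))"
  have sum_le: "e (int k) + e (- int k) \<le> E" for k
    using sum_le_suminf[OF e_summable, of "{k}"] e_nonneg by (simp add: E_def)
  have e_le: "e n \<le> E" for n
    using sum_le[of "nat \<bar>n\<bar>"] e_nonneg[of n] e_nonneg[of "- n"]
    by (cases "0 \<le> n") auto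
  define B where "B = exp E"
  have bound: "su11_norm (su11_sym_prod (s z) K) \<le> B" if "z \<in> S" for z K
    unfolding B_def E_def by (rule su11_sym_prod_norm_le[OF dev[OF that] e_nonneg e_summable])
  define M where "M K = B * (1 + E) * (e (int (Suc K)) + e (- int (Suc K)))" for K
  have increment: "su11_norm (su11_sym_prod (s z) (Suc K) - su11_sym_prod (s z) K) \<le> M K"
    if "z \<in> S" for z K
    unfolding M_def by (rule su11_sym_prod_increment_le[OF dev[OF that] e_nonneg e_le bound[OF that]])
  have "summable M"
    unfolding M_def using e_summable
    by (intro summable_mult) (simp only: summable_Suc_iff[of "\<lambda>k. e (int k) + e (- int k)"])
  moreover have "norm (fst (su11_sym_prod (s z) (Suc K)) - fst (su11_sym_prod (s z) K)) \<le> M K"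
    and "norm (snd (su11_sym_prod (s z) (Suc K)) - snd (su11_sym_prod (s z) K)) \<le> M K"
    if "z \<in> S" for z K
    using order.trans[OF norm_fst_le_su11_norm increment[OF that]]
      order.trans[OF norm_snd_le_su11_norm increment[OF that]] by simp_all
  ultimately show "uniform_limit S (\<lambda>K z. fst (su11_sym_prod (s z) K))
      (\<lambda>z. lim (\<lambda>K. fst (su11_sym_prod (s z) K))) sequentially"
    and "uniform_limit S (\<lambda>K z. snd (su11_sym_prod (s z) K))
      (\<lambda>z. lim (\<lambda>K. snd (su11_sym_prod (s z) K))) sequentially"
    by (blast intro: uniform_limit_of_summable_increments)+
qed

section \<open>Transfer matrices on the unit circle\<close>

definition step_scale :: "(int \<Rightarrow> complex) \<Rightarrow> int \<Rightarrow> real" where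
  "step_scale G n = 1 / sqrt (1 - (cmod (G n))\<^sup>2)"

definition step_pair :: "(int \<Rightarrow> complex) \<Rightarrow> complex \<Rightarrow> int \<Rightarrow> complex \<times> complex" where
  "step_pair G z n = (of_real (step_scale G n), of_real (step_scale G n) * G n * z powi n)"

abbreviation sym_transfer :: "(int \<Rightarrow> complex) \<Rightarrow> complex \<Rightarrow> nat \<Rightarrow> complex \<times> complex" where
  "sym_transfer G z K \<equiv> su11_sym_prod (step_pair G z) K"

lemma cnj_eq_inverse_if_norm_1:
  assumes "cmod z = 1"
  shows "cnj z = inverse z"
proof -
  have "z * cnj z = 1"
    using assms by (metis complex_norm_square of_real_1 one_power2)
  then show ?thesis
    using inverse_unique by metis
qed

lemma step_mat_eq_su11_mat:
  assumes "cmod z = 1"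
  shows "step_mat G z n = su11_mat (step_pair G z n)"
proof -
  have "cnj (z powi n) = z powi (- n)"
    using cnj_eq_inverse_if_norm_1[OF assms] by (simp add: power_int_minus power_int_inverse)
  then show ?thesis
    unfolding step_mat_def su11_mat_def step_pair_def step_scale_def by (simp add: vec_eq_iff)
qed

lemma transfer_eq_su11_mat:
  "cmod z = 1 \<Longrightarrow> transfer G z lo k = su11_mat (su11_prod (step_pair G z) lo k)"
  by (induction k) (simp_all add: mat_1_eq_su11_mat step_mat_eq_su11_mat su11_mat_mult)

lemma frak_a_eq_lim: "cmod z = 1 \<Longrightarrow> frak_a G z = lim (\<lambda>K. fst (sym_transfer G z K))"
  unfolding frak_a_def su11_sym_prod_def
  by (simp only: transfer_eq_su11_mat) (simp add: su11_mat_def del: su11_prod.simps)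

lemma frak_b_eq_lim: "cmod z = 1 \<Longrightarrow> frak_b G z = lim (\<lambda>K. snd (sym_transfer G z K))"
  unfolding frak_b_def su11_sym_prod_def
  by (simp only: transfer_eq_su11_mat) (simp add: su11_mat_def del: su11_prod.simps)

lemma pstar_on_sphere: "cmod z = 1 \<Longrightarrow> pstar f z = cnj (f z)"
  by (simp add: pstar_def cnj_eq_inverse_if_norm_1)

lemma frak_r_on_sphere: "cmod z = 1 \<Longrightarrow> frak_r G z = su11_refl (frak_a G z, frak_b G z)"
  by (simp add: frak_r_def su11_refl_def pstar_on_sphere)

lemma frak_eq_if_sym_transfer_eventually_const:
  assumes "cmod z = 1" and "\<And>K. K0 \<le> K \<Longrightarrow> sym_transfer G z K = p"
  shows "(frak_a G z, frak_b G z) = p"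
proof -
  have "eventually (\<lambda>K. sym_transfer G z K = p) sequentially"
    using assms(2) by (auto simp: eventually_sequentially)
  then have "(\<lambda>K. sym_transfer G z K) \<longlonglongrightarrow> p"
    by (rule tendsto_eventually)
  then have "(\<lambda>K. fst (sym_transfer G z K)) \<longlonglongrightarrow> fst p"
    and "(\<lambda>K. snd (sym_transfer G z K)) \<longlonglongrightarrow> snd p"
    by (auto intro: tendsto_fst tendsto_snd)
  then show ?thesis
    by (simp add: frak_a_eq_lim[OF assms(1)] frak_b_eq_lim[OF assms(1)] limI)
qed

lemma step_pair_eq_1: "G n = 0 \<Longrightarrow> step_pair G z n = (1, 0)"
  by (simp add: step_pair_def step_scale_def)

lemma step_pair_shift:
  assumes "z \<noteq> 0"
  shows "step_pair (shift M G) z (n + M) = su11_rotate (z powi M) (step_pair G z n)"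
proof -
  have "z powi (n + M) = z powi M * z powi n"
    using assms by (simp add: power_int_add mult.commute)
  then show ?thesis
    by (simp add: step_pair_def step_scale_def shift_def su11_rotate_def ac_simps)
qed

lemma su11_det_step_pair:
  assumes "cmod z = 1" and "cmod (G n) < 1"
  shows "su11_det (step_pair G z n) = 1"
proof -
  have pos: "0 < 1 - (cmod (G n))\<^sup>2"
    using assms(2) by (simp add: abs_square_less_1)
  define c where "c = step_scale G n"
  have c_nonneg: "0 \<le> c"
    using pos by (simp add: c_def step_scale_def)
  have c_sq: "c\<^sup>2 * (1 - (cmod (G n))\<^sup>2) = 1"
    using pos by (simp add: c_def step_scale_def power_divide)
  have "cmod (z powi n) = 1"
    using assms(1) by (simp add: norm_power_int)
  then have "su11_det (step_pair G z n) = c\<^sup>2 - c\<^sup>2 * (cmod (G n))\<^sup>2"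
    unfolding su11_det_def step_pair_def c_def[symmetric] using c_nonneg
    by (simp add: norm_mult power_mult_distrib)
  also have "\<dots> = 1"
    using c_sq by (simp add: algebra_simps)
  finally show ?thesis .
qed

lemma step_scale_bounds:
  assumes "cmod (G n) \<le> \<rho>" and "\<rho> < 1"
  shows "1 \<le> step_scale G n" and "step_scale G n \<le> 1 / sqrt (1 - \<rho>\<^sup>2)"
    and "step_scale G n - 1 \<le> cmod (G n) / sqrt (1 - \<rho>\<^sup>2)"
proof -
  define x where "x = cmod (G n)"
  define s where "s = sqrt (1 - x\<^sup>2)"
  define \<sigma> where "\<sigma> = sqrt (1 - \<rho>\<^sup>2)"
  have x: "0 \<le> x" "x \<le> \<rho>"
    using assms by (auto simp: x_def)
  have \<rho>_sq: "\<rho>\<^sup>2 < 1"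
    using x assms(2) by (simp add: abs_square_less_1)
  have x_sq: "x\<^sup>2 \<le> \<rho>\<^sup>2"
    using x by (simp add: power_mono)
  have \<sigma>_pos: "0 < \<sigma>"
    unfolding \<sigma>_def using \<rho>_sq by simp
  have \<sigma>_le: "\<sigma> \<le> s"
    unfolding \<sigma>_def s_def using x_sq by simp
  have s_sq: "s\<^sup>2 = 1 - x\<^sup>2"
    unfolding s_def using x_sq \<rho>_sq by simp
  have s_le: "s \<le> 1"
    unfolding s_def using x by simp
  have s_pos: "0 < s"
    using \<sigma>_pos \<sigma>_le by linarith
  have scale: "step_scale G n = 1 / s"
    by (simp add: step_scale_def s_def x_def)
  show "1 \<le> step_scale G n"
    using s_pos s_le by (simp add: scale)
  show "step_scale G n \<le> 1 / sqrt (1 - \<rho>\<^sup>2)"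
    using \<sigma>_pos \<sigma>_le by (simp add: scale frac_le flip: \<sigma>_def)
  have "1 - s \<le> 1 - s\<^sup>2"
    using s_pos s_le by (simp add: power2_eq_square mult_le_cancel_left1)
  also have "\<dots> = x * x"
    using s_sq by (simp add: power2_eq_square)
  also have "\<dots> \<le> x"
    using x assms(2) by (intro mult_left_le) auto
  finally have "(1 - s) / s \<le> x / \<sigma>"
    using s_pos \<sigma>_pos \<sigma>_le x by (intro frac_le) auto
  moreover have "step_scale G n - 1 = (1 - s) / s"
    using s_pos by (simp add: scale field_simps)
  ultimately show "step_scale G n - 1 \<le> cmod (G n) / sqrt (1 - \<rho>\<^sup>2)"
    by (simp add: x_def \<sigma>_def)
qed

lemma su11_norm_step_pair_sub_1_le:
  assumes "cmod z = 1" and "cmod (G n) \<le> \<rho>" and "\<rho> < 1"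
  shows "su11_norm (step_pair G z n - (1, 0)) \<le> 2 / sqrt (1 - \<rho>\<^sup>2) * cmod (G n)"
proof -
  note bounds = step_scale_bounds[of G n \<rho>, OF assms(2,3)]
  have "of_real (step_scale G n) - 1 = (of_real (step_scale G n - 1) :: complex)"
    by simp
  then have "cmod (of_real (step_scale G n) - 1) = step_scale G n - 1"
    using bounds(1) by (simp only: norm_of_real)
  moreover have "cmod (of_real (step_scale G n) * G n * z powi n) = step_scale G n * cmod (G n)"
    using bounds(1) assms(1) by (simp add: norm_mult norm_power_int)
  moreover have "step_scale G n * cmod (G n) \<le> 1 / sqrt (1 - \<rho>\<^sup>2) * cmod (G n)"
    using bounds(2) by (intro mult_right_mono) auto
  ultimately show ?thesis
    using bounds(3) by (simp add: su11_norm_def step_pair_def)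
qed

lemma Sstar_summable:
  assumes "F \<in> Sstar"
  shows "summable (\<lambda>k. cmod (F (int k)) + cmod (F (- int k)))"
proof -
  obtain C where C: "\<And>n. cmod (F n) \<le> C * (1 + real_of_int \<bar>n\<bar>) powr (-2)"
    using assms unfolding Sstar_def by fastforce
  have "summable (\<lambda>k. real (Suc k) powr (-2))"
    using summable_Suc_iff[where f="\<lambda>k. real k powr (-2)"] by (simp add: summable_real_powr_iff)
  then show ?thesis
  proof (rule summable_comparison_test'[OF summable_mult[of _ "2 * C"]])
    fix k :: nat
    show "norm (cmod (F (int k)) + cmod (F (- int k))) \<le> 2 * C * real (Suc k) powr (-2)"
      using C[of "int k"] C[of "- int k"] by (simp add: add.commute)
  qed
qed

lemma Sstar_norm_less_1: "F \<in> Sstar \<Longrightarrow> cmod (F n) < 1"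
  unfolding Sstar_def by (auto intro: order.strict_trans1)

lemma Sstar_step_pair_deviation_summable:
  assumes "F \<in> Sstar"
  obtains e where "\<And>z n. cmod z = 1 \<Longrightarrow> su11_norm (step_pair F z n - (1, 0)) \<le> e n"
    and "\<And>n. 0 \<le> e n" and "summable (\<lambda>k. e (int k) + e (- int k))"
proof -
  obtain \<rho> where \<rho>: "\<rho> < 1" "\<And>n. cmod (F n) \<le> \<rho>"
    using assms unfolding Sstar_def by blast
  define \<kappa> where "\<kappa> = 2 / sqrt (1 - \<rho>\<^sup>2)"
  have "0 \<le> \<rho>"
    using norm_ge_zero[of "F 0"] \<rho>(2)[of 0] by linarith
  then have "\<rho>\<^sup>2 \<le> 1"
    using \<rho>(1) by (simp add: power_le_one)
  then have "0 \<le> \<kappa>"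
    by (simp add: \<kappa>_def)
  show ?thesis
  proof (rule that[of "\<lambda>n. \<kappa> * cmod (F n)"])
    show "su11_norm (step_pair F z n - (1, 0)) \<le> \<kappa> * cmod (F n)" if "cmod z = 1" for z n
      unfolding \<kappa>_def using that \<rho>(2)[of n] \<rho>(1) by (rule su11_norm_step_pair_sub_1_le)
    show "0 \<le> \<kappa> * cmod (F n)" for n
      using \<open>0 \<le> \<kappa>\<close> by simp
    show "summable (\<lambda>k. \<kappa> * cmod (F (int k)) + \<kappa> * cmod (F (- int k)))"
      using summable_mult[OF Sstar_summable[OF assms], of \<kappa>] by (simp add: distrib_left)
  qed
qed

lemma Sstar_uniform_limit:
  assumes "F \<in> Sstar"
  shows "uniform_limit (sphere 0 1) (\<lambda>K z. fst (sym_transfer F z K)) (frak_a F) sequentially"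
    and "uniform_limit (sphere 0 1) (\<lambda>K z. snd (sym_transfer F z K)) (frak_b F) sequentially"
proof -
  obtain e where dev: "\<And>z n. cmod z = 1 \<Longrightarrow> su11_norm (step_pair F z n - (1, 0)) \<le> e n"
    and "\<And>n. 0 \<le> e n" and "summable (\<lambda>k. e (int k) + e (- int k))"
    using Sstar_step_pair_deviation_summable[OF assms] by blast
  moreover have "\<And>z n. z \<in> sphere 0 1 \<Longrightarrow> su11_norm (step_pair F z n - (1, 0)) \<le> e n"
    using dev by simp
  ultimately have lim:
    "uniform_limit (sphere 0 1) (\<lambda>K z. fst (sym_transfer F z K))
       (\<lambda>z. lim (\<lambda>K. fst (sym_transfer F z K))) sequentially"
    "uniform_limit (sphere 0 1) (\<lambda>K z. snd (sym_transfer F z K))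
       (\<lambda>z. lim (\<lambda>K. snd (sym_transfer F z K))) sequentially"
    by (blast intro: su11_sym_prod_uniform_limit)+
  show "uniform_limit (sphere 0 1) (\<lambda>K z. fst (sym_transfer F z K)) (frak_a F) sequentially"
    using lim(1) by (rule uniform_limit_cong'[THEN iffD1, rotated 2]) (simp_all add: frak_a_eq_lim)
  show "uniform_limit (sphere 0 1) (\<lambda>K z. snd (sym_transfer F z K)) (frak_b F) sequentially"
    using lim(2) by (rule uniform_limit_cong'[THEN iffD1, rotated 2]) (simp_all add: frak_b_eq_lim)
qed

lemma Sstar_frak_bounded:
  assumes "F \<in> Sstar"
  shows "bounded (frak_a F ` sphere 0 1)" and "bounded (frak_b F ` sphere 0 1)"
proof -
  obtain e where dev: "\<And>z n. cmod z = 1 \<Longrightarrow> su11_norm (step_pair F z n - (1, 0)) \<le> e n"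
    and e: "\<And>n. 0 \<le> e n" "summable (\<lambda>k. e (int k) + e (- int k))"
    using Sstar_step_pair_deviation_summable[OF assms] by blast
  define B where "B = exp (\<Sum>k. e (int k) + e (- int k))"
  have "su11_norm (sym_transfer F z K) \<le> B" if "z \<in> sphere 0 1" for z K
    unfolding B_def using that by (intro su11_sym_prod_norm_le dev e) simp
  then have "cmod (fst (sym_transfer F z K)) \<le> B"
    and "cmod (snd (sym_transfer F z K)) \<le> B" if "z \<in> sphere 0 1" for z K
    using that norm_fst_le_su11_norm norm_snd_le_su11_norm order.trans by blast+
  then have "bounded ((\<lambda>z. fst (sym_transfer F z K)) ` sphere 0 1)"
    and "bounded ((\<lambda>z. snd (sym_transfer F z K)) ` sphere 0 1)" for K
    unfolding bounded_iff by blast+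
  then show "bounded (frak_a F ` sphere 0 1)" and "bounded (frak_b F ` sphere 0 1)"
    by (auto intro: uniform_limit_bounded Sstar_uniform_limit[OF assms])
qed

lemma su11_det_sym_transfer:
  "(\<And>n. cmod (G n) < 1) \<Longrightarrow> cmod z = 1 \<Longrightarrow> su11_det (sym_transfer G z K) = 1"
  unfolding su11_sym_prod_def by (intro su11_det_prod su11_det_step_pair)

lemma Sstar_su11_det_frak:
  assumes "F \<in> Sstar" and "cmod z = 1"
  shows "su11_det (frak_a F z, frak_b F z) = 1"
proof -
  have z: "z \<in> sphere 0 1"
    using assms(2) by simp
  have "(\<lambda>K. su11_det (sym_transfer F z K)) \<longlonglongrightarrow> su11_det (frak_a F z, frak_b F z)"
    unfolding su11_det_def fst_conv snd_conv
    by (intro tendsto_intros tendsto_uniform_limitI[OF Sstar_uniform_limit(1)[OF assms(1)] z]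
        tendsto_uniform_limitI[OF Sstar_uniform_limit(2)[OF assms(1)] z])
  then show ?thesis
    using su11_det_sym_transfer[OF Sstar_norm_less_1[OF assms(1)] assms(2)]
    by (simp add: LIMSEQ_const_iff)
qed

section \<open>Joining truncated sequences\<close>

lemma frak_trunc_eq:
  assumes "cmod z = 1"
  shows "(frak_a (trunc (int N) F) z, frak_b (trunc (int N) F) z) = sym_transfer F z N"
proof (rule frak_eq_if_sym_transfer_eventually_const[OF assms])
  fix K
  assume "N \<le> K"
  then have "su11_sym_prod (step_pair (trunc (int N) F) z) K
      = su11_prod (step_pair (trunc (int N) F) z) (- int N) (2 * N + 1)"
    by (intro su11_sym_prod_eq_prod) (auto simp: trunc_def step_pair_eq_1)
  also have "\<dots> = sym_transfer F z N"
    unfolding su11_sym_prod_def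
    by (rule su11_prod_cong) (auto simp: trunc_def step_pair_def step_scale_def)
  finally show "su11_sym_prod (step_pair (trunc (int N) F) z) K = sym_transfer F z N" .
qed

lemma su11_prod_step_pair_shift:
  assumes "cmod z = 1"
  shows "su11_prod (step_pair (shift M G) z) (lo + M) m
    = su11_rotate (z powi M) (su11_prod (step_pair G z) lo m)"
proof -
  have "z \<noteq> 0"
    using assms by auto
  then have "su11_prod (step_pair (shift M G) z) (lo + M) m
      = su11_prod (\<lambda>n. su11_rotate (z powi M) (step_pair G z n)) lo m"
    by (simp add: su11_prod_reindex step_pair_shift)
  also have "\<dots> = su11_rotate (z powi M) (su11_prod (step_pair G z) lo m)"
    using assms by (intro su11_prod_rotate) (simp add: norm_power_int)
  finally show ?thesis .
qed

definition join_trunc :: "nat \<Rightarrow> nat \<Rightarrow> (int \<Rightarrow> complex) \<Rightarrow> (int \<Rightarrow> complex) \<Rightarrow> int \<Rightarrow> complex" where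
  "join_trunc N M F G n = trunc (int N) F n + shift (int M) (trunc (int N) G) n"

lemma frak_join_trunc_eq:
  assumes z: "cmod z = 1" and M: "2 * N < M"
  shows "(frak_a (join_trunc N M F G) z, frak_b (join_trunc N M F G) z)
    = su11_mult (su11_rotate (z ^ M) (sym_transfer G z N)) (sym_transfer F z N)"
proof (rule frak_eq_if_sym_transfer_eventually_const[OF z])
  define s where "s = step_pair (join_trunc N M F G) z"
  have len: "M + 2 * N + 1 = (2 * N + 1) + (M - 2 * N - 1) + (2 * N + 1)"
    using M by simp
  have "2 * N + 1 + (M - 2 * N - 1) = M"
    using M by simp
  then have gap_start: "- int N + int (2 * N + 1) = int N + 1"
    and G_start: "- int N + int (2 * N + 1 + (M - 2 * N - 1)) = - int N + int M"
    by simp_all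
  have "su11_prod s (- int N) (M + 2 * N + 1)
      = su11_mult (su11_prod s (- int N + int M) (2 * N + 1))
          (su11_mult (su11_prod s (int N + 1) (M - 2 * N - 1)) (su11_prod s (- int N) (2 * N + 1)))"
    unfolding len su11_prod_add gap_start G_start by (simp add: su11_mult_assoc)
  also have "su11_prod s (int N + 1) (M - 2 * N - 1) = (1, 0)"
    unfolding s_def
    by (rule su11_prod_trivial) (auto simp: join_trunc_def trunc_def shift_def step_pair_eq_1)
  also have "su11_prod s (- int N) (2 * N + 1) = sym_transfer F z N"
    unfolding s_def su11_sym_prod_def using M
    by (intro su11_prod_cong)
      (auto simp: join_trunc_def trunc_def shift_def step_pair_def step_scale_def)
  also have "su11_prod s (- int N + int M) (2 * N + 1)
      = su11_prod (step_pair (shift (int M) G) z) (- int N + int M) (2 * N + 1)"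
    unfolding s_def using M
    by (intro su11_prod_cong)
      (auto simp: join_trunc_def trunc_def shift_def step_pair_def step_scale_def)
  also have "\<dots> = su11_rotate (z ^ M) (sym_transfer G z N)"
    unfolding su11_prod_step_pair_shift[OF z] su11_sym_prod_def by simp
  finally have prod: "su11_prod s (- int N) (M + 2 * N + 1)
      = su11_mult (su11_rotate (z ^ M) (sym_transfer G z N)) (sym_transfer F z N)"
    by simp
  fix K
  assume "M + N \<le> K"
  then have "su11_sym_prod s K = su11_prod s (- int N) (M + 2 * N + 1)"
    unfolding s_def
    by (intro su11_sym_prod_eq_prod) (auto simp: join_trunc_def trunc_def shift_def step_pair_eq_1)
  then show "su11_sym_prod (step_pair (join_trunc N M F G) z) K
    = su11_mult (su11_rotate (z ^ M) (sym_transfer G z N)) (sym_transfer F z N)"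
    using prod by (simp add: s_def)
qed

section \<open>Reflection coefficients\<close>

lemma unit_hyperbola_ineq:
  fixes p q s t :: real
  assumes "0 \<le> p" "0 \<le> q" "0 \<le> s" "0 \<le> t" "p\<^sup>2 = 1 + q\<^sup>2" "s\<^sup>2 = 1 + t\<^sup>2"
  shows "s - t \<le> p * (s * p - t * q)"
proof -
  have "t\<^sup>2 < s\<^sup>2"
    using assms by simp
  then have ts: "t < s"
    using assms(3) by (rule power2_less_imp_less)
  have "0 \<le> (p - q)\<^sup>2"
    by simp
  then have "p * q \<le> 1 + q\<^sup>2"
    using assms(5) by (simp add: power2_eq_square algebra_simps)
  then have "t * (p * q) \<le> t * (1 + q\<^sup>2)"
    using assms(4) by (rule mult_left_mono)
  moreover have "t * q\<^sup>2 \<le> s * q\<^sup>2"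
    using ts by (simp add: mult_right_mono)
  moreover have "p * (s * p - t * q) = s * p\<^sup>2 - t * (p * q)"
    by (simp add: power2_eq_square algebra_simps)
  ultimately show ?thesis
    using assms(5) by (simp add: algebra_simps)
qed

lemma su11_refl_mult_sub_le:
  assumes p: "su11_det p = 1" and q: "su11_det q = 1"
  shows "cmod (su11_refl (su11_mult q p) - su11_refl p) \<le> cmod (su11_refl q) / (1 - cmod (su11_refl q))"
proof -
  obtain a b \<alpha> \<beta> where ab: "p = (a, b)" and \<alpha>\<beta>: "q = (\<alpha>, \<beta>)"
    by fastforce
  define A where "A = \<alpha> * a + cnj \<beta> * b"
  define B where "B = \<beta> * a + cnj \<alpha> * b"
  have det_ab: "(cmod a)\<^sup>2 = 1 + (cmod b)\<^sup>2" and det_\<alpha>\<beta>: "(cmod \<alpha>)\<^sup>2 = 1 + (cmod \<beta>)\<^sup>2"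
    using p q by (simp_all add: ab \<alpha>\<beta> su11_det_def)
  have \<beta>_lt: "cmod \<beta> < cmod \<alpha>"
    by (rule power2_less_imp_less) (use det_\<alpha>\<beta> in auto)
  have a0: "a \<noteq> 0"
    using su11_det_eq_1_imp(1)[OF p] by (simp add: ab)
  have "cmod \<alpha> * cmod a - cmod \<beta> * cmod b \<le> cmod A"
    using norm_diff_ineq[of "\<alpha> * a" "cnj \<beta> * b"] by (simp add: A_def norm_mult)
  then have "cmod a * (cmod \<alpha> * cmod a - cmod \<beta> * cmod b) \<le> cmod a * cmod A"
    by (rule mult_left_mono) simp
  moreover have "cmod \<alpha> - cmod \<beta> \<le> cmod a * (cmod \<alpha> * cmod a - cmod \<beta> * cmod b)"
    using det_ab det_\<alpha>\<beta> by (intro unit_hyperbola_ineq) simp_all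
  ultimately have "cmod \<alpha> - cmod \<beta> \<le> cmod a * cmod A"
    by linarith
  then have A0: "A \<noteq> 0" and pos: "0 < cmod \<alpha> - cmod \<beta>"
    using \<beta>_lt by auto
  have "B * cnj a - b * cnj A = \<beta> * (a * cnj a - b * cnj b)"
    unfolding A_def B_def by (simp add: algebra_simps)
  also have "a * cnj a - b * cnj b = 1"
    using det_ab by (simp add: complex_norm_square[symmetric])
  finally have num: "B * cnj a - b * cnj A = \<beta>"
    by simp
  have "cmod (B / cnj A - b / cnj a) = cmod \<beta> / (cmod a * cmod A)"
    using A0 a0 num by (simp add: field_simps norm_divide norm_mult)
  also have "\<dots> \<le> cmod \<beta> / (cmod \<alpha> - cmod \<beta>)"
    using \<open>cmod \<alpha> - cmod \<beta> \<le> cmod a * cmod A\<close> pos by (intro divide_left_mono) auto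
  also have "\<dots> = (cmod \<beta> / cmod \<alpha>) / (1 - cmod \<beta> / cmod \<alpha>)"
    using pos \<beta>_lt by (auto simp: field_simps)
  finally show ?thesis
    by (simp add: ab \<alpha>\<beta> su11_mult_def su11_refl_def A_def B_def norm_divide)
qed

lemma pstar_frak_a_join_trunc_error_le:
  assumes z: "cmod z = 1" and M: "2 * N < M"
  shows "cmod (pstar (frak_a (join_trunc N M F G)) z
            - (pstar (frak_a F) z * pstar (frak_a G) z + z ^ M * pstar (frak_b F) z * frak_b G z))
    \<le> cmod (fst (sym_transfer G z N) * fst (sym_transfer F z N) - frak_a G z * frak_a F z)
      + cmod (snd (sym_transfer G z N) * cnj (snd (sym_transfer F z N)) - frak_b G z * cnj (frak_b F z))"
proof -
  define p where "p = sym_transfer F z N"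
  define q where "q = sym_transfer G z N"
  have "frak_a (join_trunc N M F G) z = fst q * fst p + cnj (z ^ M * snd q) * snd p"
    using frak_join_trunc_eq[OF z M, of F G] by (simp add: su11_mult_def su11_rotate_def p_def q_def)
  then have "pstar (frak_a (join_trunc N M F G)) z
      - (pstar (frak_a F) z * pstar (frak_a G) z + z ^ M * pstar (frak_b F) z * frak_b G z)
    = cnj (fst q * fst p - frak_a G z * frak_a F z)
      + z ^ M * (snd q * cnj (snd p) - frak_b G z * cnj (frak_b F z))"
    by (simp add: pstar_on_sphere[OF z] algebra_simps)
  also have "cmod \<dots> \<le> cmod (fst q * fst p - frak_a G z * frak_a F z)
      + cmod (snd q * cnj (snd p) - frak_b G z * cnj (frak_b F z))"
    by (rule order.trans[OF norm_triangle_ineq])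
      (simp only: complex_mod_cnj norm_mult norm_power z power_one mult_1_left order.refl)
  finally show ?thesis
    by (simp only: p_def q_def)
qed

lemma frak_b_join_trunc_error_le:
  assumes z: "cmod z = 1" and M: "2 * N < M"
  shows "cmod (frak_b (join_trunc N M F G) z
            - (z ^ M * frak_b G z * frak_a F z + frak_b F z * pstar (frak_a G) z))
    \<le> cmod (snd (sym_transfer G z N) * fst (sym_transfer F z N) - frak_b G z * frak_a F z)
      + cmod (snd (sym_transfer F z N) * cnj (fst (sym_transfer G z N)) - frak_b F z * cnj (frak_a G z))"
proof -
  define p where "p = sym_transfer F z N"
  define q where "q = sym_transfer G z N"
  have "frak_b (join_trunc N M F G) z = z ^ M * snd q * fst p + cnj (fst q) * snd p"
    using frak_join_trunc_eq[OF z M, of F G] by (simp add: su11_mult_def su11_rotate_def p_def q_def)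
  then have "frak_b (join_trunc N M F G) z
      - (z ^ M * frak_b G z * frak_a F z + frak_b F z * pstar (frak_a G) z)
    = z ^ M * (snd q * fst p - frak_b G z * frak_a F z)
      + (snd p * cnj (fst q) - frak_b F z * cnj (frak_a G z))"
    by (simp add: pstar_on_sphere[OF z] algebra_simps)
  also have "cmod \<dots> \<le> cmod (snd q * fst p - frak_b G z * frak_a F z)
      + cmod (snd p * cnj (fst q) - frak_b F z * cnj (frak_a G z))"
    by (rule order.trans[OF norm_triangle_ineq])
      (simp only: norm_mult norm_power z power_one mult_1_left order.refl)
  finally show ?thesis
    by (simp only: p_def q_def)
qed

lemma frak_r_join_trunc_sub_le:
  assumes F: "\<And>n. cmod (F n) < 1" and G: "\<And>n. cmod (G n) < 1"
    and z: "cmod z = 1" and M: "2 * N < M"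
  shows "cmod (frak_r (join_trunc N M F G) z - frak_r (trunc (int N) F) z)
    \<le> cmod (su11_refl (sym_transfer G z N)) / (1 - cmod (su11_refl (sym_transfer G z N)))"
proof -
  define p where "p = sym_transfer F z N"
  define q where "q = su11_rotate (z ^ M) (sym_transfer G z N)"
  have "frak_r (join_trunc N M F G) z = su11_refl (su11_mult q p)"
    using frak_join_trunc_eq[OF z M, of F G] by (simp add: frak_r_on_sphere[OF z] p_def q_def)
  moreover have "frak_r (trunc (int N) F) z = su11_refl p"
    using frak_trunc_eq[OF z, of N F] by (simp add: frak_r_on_sphere[OF z] p_def)
  moreover have "su11_det p = 1" and "su11_det q = 1"
    using su11_det_sym_transfer[OF F z] su11_det_sym_transfer[OF G z]
    by (simp_all add: p_def q_def su11_det_rotate norm_power z)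
  moreover have "cmod (su11_refl q) = cmod (su11_refl (sym_transfer G z N))"
    by (simp add: q_def norm_su11_refl_rotate norm_power z)
  ultimately show ?thesis
    using su11_refl_mult_sub_le[of p q] by simp
qed

context
  fixes F G :: "int \<Rightarrow> complex" and m :: "nat \<Rightarrow> nat"
  assumes F: "F \<in> Sstar" and G: "G \<in> Sstar"
    and m: "eventually (\<lambda>N. 2 * N < m N) sequentially"
begin

lemma uniform_limit_pstar_frak_a_join_trunc:
  "uniform_limit (sphere 0 1)
     (\<lambda>N z. pstar (frak_a (join_trunc N (m N) F G)) z
        - (pstar (frak_a F) z * pstar (frak_a G) z + z ^ m N * pstar (frak_b F) z * frak_b G z))
     (\<lambda>z. 0) sequentially"
proof (rule uniform_limit_null_if_dominated[OF _ _ eventually_mono[OF m]])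
  show "uniform_limit (sphere 0 1) (\<lambda>N z. fst (sym_transfer G z N) * fst (sym_transfer F z N))
      (\<lambda>z. frak_a G z * frak_a F z) sequentially"
    by (intro uniform_lim_mult Sstar_uniform_limit Sstar_frak_bounded F G)
  show "uniform_limit (sphere 0 1) (\<lambda>N z. snd (sym_transfer G z N) * cnj (snd (sym_transfer F z N)))
      (\<lambda>z. frak_b G z * cnj (frak_b F z)) sequentially"
    by (intro uniform_lim_mult bounded_linear.uniform_limit[OF bounded_linear_cnj]
        Sstar_uniform_limit Sstar_frak_bounded bounded_image_cnj F G)
qed (simp add: pstar_frak_a_join_trunc_error_le)

lemma uniform_limit_frak_b_join_trunc:
  "uniform_limit (sphere 0 1)
     (\<lambda>N z. frak_b (join_trunc N (m N) F G) z
        - (z ^ m N * frak_b G z * frak_a F z + frak_b F z * pstar (frak_a G) z))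
     (\<lambda>z. 0) sequentially"
proof (rule uniform_limit_null_if_dominated[OF _ _ eventually_mono[OF m]])
  show "uniform_limit (sphere 0 1) (\<lambda>N z. snd (sym_transfer G z N) * fst (sym_transfer F z N))
      (\<lambda>z. frak_b G z * frak_a F z) sequentially"
    by (intro uniform_lim_mult Sstar_uniform_limit Sstar_frak_bounded F G)
  show "uniform_limit (sphere 0 1) (\<lambda>N z. snd (sym_transfer F z N) * cnj (fst (sym_transfer G z N)))
      (\<lambda>z. frak_b F z * cnj (frak_a G z)) sequentially"
    by (intro uniform_lim_mult bounded_linear.uniform_limit[OF bounded_linear_cnj]
        Sstar_uniform_limit Sstar_frak_bounded bounded_image_cnj F G)
qed (simp add: frak_b_join_trunc_error_le)

lemma limsup_frak_r_join_trunc_le: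
  assumes "z \<in> sphere 0 1"
  shows "limsup (\<lambda>N. ereal (cmod (frak_r (join_trunc N (m N) F G) z - frak_r (trunc (int N) F) z)))
    \<le> ereal (cmod (frak_r G z) / (1 - cmod (frak_r G z)))"
proof -
  have z: "cmod z = 1"
    using assms by simp
  define r where "r N = su11_refl (sym_transfer G z N)" for N
  have det: "su11_det (frak_a G z, frak_b G z) = 1"
    by (rule Sstar_su11_det_frak[OF G z])
  have "r \<longlonglongrightarrow> frak_r G z"
    unfolding r_def[abs_def] su11_refl_def frak_r_on_sphere[OF z] fst_conv snd_conv
    using su11_det_eq_1_imp(1)[OF det]
    by (intro tendsto_intros tendsto_uniform_limitI[OF Sstar_uniform_limit(1)[OF G] assms]
        tendsto_uniform_limitI[OF Sstar_uniform_limit(2)[OF G] assms]) simp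
  moreover have "cmod (frak_r G z) < 1"
    using su11_det_eq_1_imp(2)[OF det] by (simp add: frak_r_on_sphere[OF z])
  ultimately have "(\<lambda>N. cmod (r N) / (1 - cmod (r N)))
      \<longlonglongrightarrow> cmod (frak_r G z) / (1 - cmod (frak_r G z))"
    by (intro tendsto_intros) auto
  then have "limsup (\<lambda>N. ereal (cmod (r N) / (1 - cmod (r N))))
      = ereal (cmod (frak_r G z) / (1 - cmod (frak_r G z)))"
    by (intro lim_imp_Limsup) auto
  moreover have "limsup (\<lambda>N. ereal (cmod (frak_r (join_trunc N (m N) F G) z - frak_r (trunc (int N) F) z)))
      \<le> limsup (\<lambda>N. ereal (cmod (r N) / (1 - cmod (r N))))"
    using m unfolding r_def
    by (intro Limsup_mono) (auto elim!: eventually_mono intro: frak_r_join_trunc_sub_le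
        Sstar_norm_less_1 F G z)
  ultimately show ?thesis
    by simp
qed

end

theorem lemma2p2:
  fixes F G :: "int \<Rightarrow> complex"
  assumes "F \<in> Sstar" and "G \<in> Sstar"
  shows "uniform_limit (sphere 0 1)
           (\<lambda>N z. pstar (frak_a (\<lambda>n. trunc (int N) F n + shift (3 * int N) (trunc (int N) G) n)) z
                  - (pstar (frak_a F) z * pstar (frak_a G) z
                     + z ^ (3 * N) * pstar (frak_b F) z * frak_b G z))
           (\<lambda>z. 0) sequentially \<and>
         uniform_limit (sphere 0 1)
           (\<lambda>N z. frak_b (\<lambda>n. trunc (int N) F n + shift (3 * int N) (trunc (int N) G) n) z
                  - (z ^ (3 * N) * frak_b G z * frak_a F z
                     + frak_b F z * pstar (frak_a G) z))
           (\<lambda>z. 0) sequentially \<and>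
         (\<forall>z \<in> sphere 0 1.
           limsup (\<lambda>N. ereal (cmod
              (frak_r (\<lambda>n. trunc (int N) F n + shift (3 * int N) (trunc (int N) G) n) z
               - frak_r (trunc (int N) F) z)))
           \<le> ereal (cmod (frak_r G z) / (1 - cmod (frak_r G z))))"
proof -
  have disjoint: "eventually (\<lambda>N. 2 * N < 3 * N) sequentially"
    by (rule eventually_sequentiallyI[of 1]) simp
  have join: "(\<lambda>n. trunc (int N) F n + shift (3 * int N) (trunc (int N) G) n) = join_trunc N (3 * N) F G"
    for N
    by (simp add: join_trunc_def fun_eq_iff)
  show ?thesis
    unfolding join
    using uniform_limit_pstar_frak_a_join_trunc[OF assms disjoint]
      uniform_limit_frak_b_join_trunc[OF assms disjoint]
      limsup_frak_r_join_trunc_le[OF assms disjoint]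
    by blast
qed

end
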